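(* Let $\alpha:\mathbb Z_+\times\mathbb Z_+\to\mathbb R$ be defined by $\alpha(0,s)=0$ for all $s\in\mathbb Z_+$ and, for $n\in\mathbb Z_+$, \[ \alpha(n+1,0)=\frac2{N^2}+\alpha(n,0)+\frac2{N^2}\sum_{s=1}^\infty\alpha(n,s)\mathrm{tr}(Q^s),\qquad \alpha(n+1,1)=-\frac2{N^2}+\frac{N-2}N\alpha(n,1)-\frac2{N^2}\sum_{s=1}^\infty\alpha(n,s)\mathrm{tr}(Q^s), \] \[ \alpha(n+1,s)=\frac{N-2}N\alpha(n,s)+\frac2N\alpha(n,s-1),\quad s\ge2 \] (so $\alpha(n,s)=0$ for $s\ge n+1$ and all sums are finite). Then \[ L_0^n(J)=J+\sum_{s=0}^\infty\alpha(n,s)Q^s\qquad\text{for all }n\in\mathbb Z_+. \] Moreover, if $Q$ is walk-regular, then $L^n(J)=L_0^n(J)=J+\sum_{s=0}^\infty\alpha(n,s)Q^s$ for all $n\in\mathbb N$.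
   Context: $E$ is a finite set with $N=\#E>8$ elements, listed in a fixed order; $\mathsf M_E$ is the space of complex $N\times N$ matrices indexed by $E\times E$. $|x\rangle$ (resp. $\langle x|$) is the column (resp. row) vector with 1 in coordinate $x$ and 0 elsewhere; $C^*$ denotes transpose. $Q$ is an irreducible stochastic matrix on $E$ with $Q(x,y)=Q(y,x)$ for all $x,y$ and $\mathrm{tr}(Q)=0$. $I$ is the identity and $J$ the matrix with all entries $1/N$. $Q$ is walk-regular if $Q^s(x,x)$ does not depend on $x\in E$ for every $s\in\mathbb Z_+$. Let $(U,V)$ be a random pair in $E\times E$ with $\mathbb P(U=x,V=y)=\frac1NQ(x,y)$ and $T=I-|U\rangle\langle U|+|U\rangle\langle V|$; the linear operator $L:\mathsf M_E\to\mathsf M_E$ is $L(C)=\mathbb E[T^*CT]$. The linear operator $L_0:\mathsf M_E\to\mathsf M_E$ is \[ L_0(C)=\frac{N-2}NC+\frac1N(CQ+QC)-\frac{2\,\mathrm{tr}(C)}{N^2}Q+\frac{2\,\mathrm{tr}(C)}{N^2}I. \] Powers $L^n$, $L_0^n$ denote $n$-fold composition ($L^0=L_0^0=$ identity). *)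

theory Defs
  imports "HOL-Analysis.Analysis"
begin

text \<open>Matrices indexed by a finite type 'e (the set E, in its fixed enumeration).
  Matrix product is (**), identity is mat 1, transpose is transpose, trace is trace.\<close>

primrec mpow :: "'a::semiring_1^'n^'n \<Rightarrow> nat \<Rightarrow> 'a^'n^'n" where
  "mpow A 0 = mat 1"
| "mpow A (Suc k) = A ** mpow A k"

definition cmat :: "real^'n^'m \<Rightarrow> complex^'n^'m" where
  "cmat A = (\<chi> i j. complex_of_real (A $ i $ j))"

definition smat :: "complex \<Rightarrow> complex^'n^'m \<Rightarrow> complex^'n^'m" where
  "smat c A = (\<chi> i j. c * A $ i $ j)"

definition ketbra :: "'e::finite \<Rightarrow> 'e \<Rightarrow> complex^'e^'e" where
  "ketbra x y = (\<chi> i j. if i = x \<and> j = y then 1 else 0)"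

definition stochastic :: "real^'e^'e \<Rightarrow> bool" where
  "stochastic Q \<longleftrightarrow> (\<forall>x y. Q $ x $ y \<ge> 0) \<and> (\<forall>x. (\<Sum>y\<in>UNIV. Q $ x $ y) = 1)"

definition irreducible_mat :: "real^'e^'e \<Rightarrow> bool" where
  "irreducible_mat Q \<longleftrightarrow> (\<forall>x y. \<exists>s. mpow Q s $ x $ y > 0)"

definition walk_regular :: "real^'e^'e \<Rightarrow> bool" where
  "walk_regular Q \<longleftrightarrow> (\<forall>s x y. mpow Q s $ x $ x = mpow Q s $ y $ y)"

definition Jmat :: "complex^'e^'e" where
  "Jmat = (\<chi> i j. 1 / of_nat CARD('e))"

definition Tmat :: "'e::finite \<Rightarrow> 'e \<Rightarrow> complex^'e^'e" where
  "Tmat u v = mat 1 - ketbra u u + ketbra u v"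

text \<open>L(C) = E[T^* C T] where P(U=x,V=y) = Q(x,y)/N; the expectation over the finite
  space E x E written out as a weighted sum.\<close>
definition Lop :: "real^'e^'e \<Rightarrow> complex^'e^'e \<Rightarrow> complex^'e^'e" where
  "Lop Q C = (\<Sum>x\<in>UNIV. \<Sum>y\<in>UNIV.
      smat (complex_of_real (Q $ x $ y / real CARD('e))) (transpose (Tmat x y) ** C ** Tmat x y))"

definition L0op :: "real^'e^'e \<Rightarrow> complex^'e^'e \<Rightarrow> complex^'e^'e" where
  "L0op Q C = (let N = of_nat CARD('e) :: complex in
      smat ((N - 2) / N) C + smat (1 / N) (C ** cmat Q + cmat Q ** C)
      - smat (2 * trace C / N^2) (cmat Q) + smat (2 * trace C / N^2) (mat 1))"

primrec alpha :: "real^'e^'e \<Rightarrow> nat \<Rightarrow> nat \<Rightarrow> real" where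
  "alpha Q 0 = (\<lambda>s. 0)"
| "alpha Q (Suc n) = (let N = real CARD('e);
      S = (\<Sum>s. alpha Q n (Suc s) * trace (mpow Q (Suc s))) in
      (\<lambda>s. if s = 0 then 2 / N^2 + alpha Q n 0 + 2 / N^2 * S
           else if s = 1 then - 2 / N^2 + (N - 2) / N * alpha Q n 1 - 2 / N^2 * S
           else (N - 2) / N * alpha Q n s + 2 / N * alpha Q n (s - 1)))"

end

theory Submission
  imports Defs
begin

(* Write N = #E.
   For C = J + P with P = sum_s a_s Q^s one has CQ = QC = J + R with
   R = sum_s a_s Q^(s+1) (JQ = QJ = J since Q is symmetric and stochastic) and
   tr C = 1 + sum_s a_s tr(Q^s).  Inserting this into the definition of L0 gives
   L0(C) = J + (N-2)/N P + 2/N R + t (I - Q) with t = 2 tr C / N^2, and a shift of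
   the summation index identifies the right-hand side with the series whose
   coefficients are alpha(n+1,.).

   For the second claim write T = I + |x>(<y| - <x|); then T^* C T is C plus
   rank-one corrections, and averaging them against the symmetric stochastic
   weight Q(x,y)/N shows L(C) = L0(C) for every C with constant diagonal.  For
   walk-regular Q every iterate J + sum_s alpha(n,s) Q^s has constant diagonal,
   so the iterates of L and L0 on J coincide. *)

lemma matrix_add_rdistrib: "((A::'a::semiring_1^'n^'m) + B) ** C = A ** C + B ** C"
  by (vector matrix_matrix_mult_def sum.distrib[symmetric] field_simps)

lemma matrix_mul_sum_right:
  "finite S \<Longrightarrow> (A::'a::semiring_1^'n^'m) ** sum f S = (\<Sum>s\<in>S. A ** f s)"
  by (induction S rule: finite_induct) (auto simp: matrix_add_ldistrib)

lemma matrix_mul_sum_left: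
  "finite S \<Longrightarrow> sum f S ** (A::'a::semiring_1^'n^'m) = (\<Sum>s\<in>S. f s ** A)"
  by (induction S rule: finite_induct) (auto simp: matrix_add_rdistrib)

lemma matrix_mul_scaleR_left: "(r *\<^sub>R (A::'a::real_algebra_1^'n^'m)) ** B = r *\<^sub>R (A ** B)"
  by (simp add: scalar_matrix_assoc)

lemma matrix_mul_scaleR_right: "(A::'a::real_algebra_1^'n^'m) ** (r *\<^sub>R B) = r *\<^sub>R (A ** B)"
  by (simp add: matrix_scalar_ac scalar_matrix_assoc)

lemma trace_sum: "trace (sum f S :: 'a::semiring_1^'n^'n) = (\<Sum>s\<in>S. trace (f s))"
  unfolding trace_def by (simp add: sum_component sum.swap[of _ S])

lemma trace_scaleR: "trace (r *\<^sub>R (A :: 'a::real_algebra_1^'n^'n)) = r *\<^sub>R trace A"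
  unfolding trace_def by (simp add: scaleR_sum_right)

lemma mpow_commute: "mpow A k ** A = A ** mpow (A::'a::semiring_1^'n^'n) k"
  by (induction k) (auto simp: matrix_mul_assoc[symmetric])

lemma cmat_entry [simp]: "cmat A $ i $ j = complex_of_real (A $ i $ j)"
  by (simp add: cmat_def)

lemma mpow_cmat: "mpow (cmat (A::real^'n^'n)) s = cmat (mpow A s)"
proof (induction s)
  case 0
  show ?case by (simp add: vec_eq_iff mat_def)
next
  case (Suc s)
  then show ?case by (simp add: vec_eq_iff matrix_matrix_mult_def)
qed

lemma trace_cmat: "trace (cmat (A::real^'n^'n)) = complex_of_real (trace A)"
  by (simp add: trace_def)

lemma smat_of_real: "smat (complex_of_real r) A = r *\<^sub>R A"
  by (simp add: smat_def vec_eq_iff scaleR_conv_of_real[where 'a=complex])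

lemma stochastic_row_sum:
  "stochastic Q \<Longrightarrow> (\<Sum>y\<in>UNIV. complex_of_real (Q $ x $ y)) = 1"
  unfolding stochastic_def by (metis of_real_1 of_real_sum)

lemma Jmat_absorbs:
  assumes st: "stochastic Q" and sym: "\<forall>x y. Q $ x $ y = Q $ y $ x"
  shows "Jmat ** cmat Q = Jmat" and "cmat Q ** Jmat = Jmat"
proof -
  have col: "(\<Sum>y\<in>UNIV. complex_of_real (Q $ y $ x)) = 1" for x
    using stochastic_row_sum[OF st, of x] sym by simp
  show "Jmat ** cmat Q = Jmat"
    by (simp add: vec_eq_iff matrix_matrix_mult_def Jmat_def sum_divide_distrib[symmetric] col)
  show "cmat Q ** Jmat = Jmat"
    by (simp add: vec_eq_iff matrix_matrix_mult_def Jmat_def sum_divide_distrib[symmetric]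
        stochastic_row_sum[OF st])
qed

lemma trace_Jmat: "trace (Jmat :: complex^'e^'e) = 1"
  by (simp add: trace_def Jmat_def)

section \<open>L agrees with L0 on matrices with constant diagonal\<close>

text \<open>The coordinates of the vector |y> - |x>; in these terms T = I + |x>(<y| - <x|).\<close>

definition edge_diff :: "'e \<Rightarrow> 'e \<Rightarrow> 'e \<Rightarrow> complex" where
  "edge_diff x y a = (if a = y then 1 else 0) - (if a = x then 1 else 0)"

lemma Tmat_entry:
  "Tmat x y $ a $ b = (if a = b then 1 else 0) + (if a = x then edge_diff x y b else 0)"
  by (simp add: Tmat_def ketbra_def mat_def edge_diff_def)

lemma transpose_Tmat_mult_entry:
  "(transpose (Tmat x y) ** C) $ i $ j = C $ i $ j + edge_diff x y i * C $ x $ j"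
proof -
  have "(transpose (Tmat x y) ** C) $ i $ j
      = (\<Sum>k\<in>UNIV. (if k = i then C $ k $ j else 0) + (if k = x then edge_diff x y i * C $ x $ j else 0))"
    unfolding matrix_matrix_mult_def transpose_def
    by (simp add: Tmat_entry) (intro sum.cong, auto simp: algebra_simps)
  then show ?thesis by (simp add: sum.distrib)
qed

lemma mult_Tmat_entry:
  "(C ** Tmat x y) $ i $ j = C $ i $ j + C $ i $ x * edge_diff x y j"
proof -
  have "(C ** Tmat x y) $ i $ j
      = (\<Sum>k\<in>UNIV. (if k = j then C $ i $ k else 0) + (if k = x then C $ i $ x * edge_diff x y j else 0))"
    unfolding matrix_matrix_mult_def
    by (simp add: Tmat_entry) (intro sum.cong, auto simp: algebra_simps)
  then show ?thesis by (simp add: sum.distrib)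
qed

lemma Tmat_conj_entry:
  "(transpose (Tmat x y) ** C ** Tmat x y) $ i $ j
     = C $ i $ j + edge_diff x y i * C $ x $ j + C $ i $ x * edge_diff x y j
       + edge_diff x y i * edge_diff x y j * C $ x $ x"
  by (simp add: mult_Tmat_entry transpose_Tmat_mult_entry algebra_simps)

lemma sum_if_const: "(\<Sum>y\<in>A. if P then g y else 0) = (if P then sum g A else (0::'a::comm_monoid_add))"
  by simp

text \<open>The averages of the corrections against a symmetric weight with unit row sums:
  these are what turn the conjugations T^* C T into the terms of L0.\<close>

locale symmetric_stochastic_weight =
  fixes q :: "'e::finite \<Rightarrow> 'e \<Rightarrow> complex"
  assumes row_sum: "(\<Sum>y\<in>UNIV. q x y) = 1"
    and symmetric: "q x y = q y x"
begin

lemma column_sum: "(\<Sum>x\<in>UNIV. q x y) = 1"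
  using row_sum[of y] by (simp add: symmetric[of _ y])

lemma total_weight: "(\<Sum>x\<in>UNIV. \<Sum>y\<in>UNIV. q x y) = of_nat CARD('e)"
  by (simp add: row_sum)

lemma average_edge_diff:
  "(\<Sum>x\<in>UNIV. \<Sum>y\<in>UNIV. q x y * (edge_diff x y i * f x)) = (\<Sum>x\<in>UNIV. q i x * f x) - f i"
proof -
  have "q x y * (edge_diff x y i * f x)
      = (if y = i then q x i * f x else 0) - (if x = i then q i y * f i else 0)" for x y
    by (auto simp: edge_diff_def)
  then have "(\<Sum>x\<in>UNIV. \<Sum>y\<in>UNIV. q x y * (edge_diff x y i * f x))
      = (\<Sum>x\<in>UNIV. q x i * f x) - (\<Sum>y\<in>UNIV. q i y) * f i"
    by (simp add: sum_subtractf sum_distrib_right sum_if_const)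
  then show ?thesis by (simp add: row_sum symmetric[of _ i])
qed

lemma average_edge_diff_square:
  "(\<Sum>x\<in>UNIV. \<Sum>y\<in>UNIV. q x y * (edge_diff x y i * edge_diff x y j))
     = 2 * (if i = j then 1 else 0) - 2 * q i j"
proof -
  have "q x y * (edge_diff x y i * edge_diff x y j)
      = (if y = i then (if i = j then q x i else 0) else 0)
        + (if x = i then (if i = j then q i y else 0) else 0)
        - (if x = j then (if y = i then q j i else 0) else 0)
        - (if x = i then (if y = j then q i j else 0) else 0)" for x y
    by (auto simp: edge_diff_def)
  then have "(\<Sum>x\<in>UNIV. \<Sum>y\<in>UNIV. q x y * (edge_diff x y i * edge_diff x y j))
      = (if i = j then (\<Sum>x\<in>UNIV. q x i) + (\<Sum>y\<in>UNIV. q i y) else 0) - q j i - q i j"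
    by (simp add: sum_subtractf sum.distrib sum_if_const)
  then show ?thesis by (simp add: row_sum column_sum symmetric[of j i])
qed

end

lemma L0op_entry:
  fixes Q :: "real^'e^'e"
  assumes sym: "\<forall>x y. Q $ x $ y = Q $ y $ x"
  defines "N \<equiv> of_nat CARD('e) :: complex"
  shows "L0op Q C $ i $ j = (N - 2) / N * C $ i $ j
      + 1 / N * ((\<Sum>x\<in>UNIV. of_real (Q $ i $ x) * C $ x $ j) + (\<Sum>x\<in>UNIV. of_real (Q $ j $ x) * C $ i $ x))
      - 2 * trace C / N^2 * of_real (Q $ i $ j) + 2 * trace C / N^2 * (if i = j then 1 else 0)"
  by (simp add: L0op_def Let_def smat_def matrix_matrix_mult_def mat_def N_def sym
      algebra_simps)

lemma Lop_eq_L0op: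
  fixes Q :: "real^'e^'e" and C :: "complex^'e^'e"
  assumes st: "stochastic Q" and sym: "\<forall>x y. Q $ x $ y = Q $ y $ x"
    and diag: "\<And>x. C $ x $ x = c"
  shows "Lop Q C = L0op Q C"
proof -
  define q where "q x y = complex_of_real (Q $ x $ y)" for x y
  define N where "N = (of_nat CARD('e) :: complex)"
  interpret symmetric_stochastic_weight q
    by unfold_locales (use stochastic_row_sum[OF st] sym in \<open>simp_all add: q_def\<close>)
  have N0: "N \<noteq> 0" unfolding N_def by simp
  have trace_C: "trace C = N * c" by (simp add: trace_def diag N_def)
  have "Lop Q C $ i $ j = L0op Q C $ i $ j" for i j
  proof -
    have averaged_entry: "q x y / N * (transpose (Tmat x y) ** C ** Tmat x y) $ i $ j
        = (1 / N) * (q x y * C $ i $ j + q x y * (edge_diff x y i * C $ x $ j)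
          + q x y * (edge_diff x y j * C $ i $ x) + c * (q x y * (edge_diff x y i * edge_diff x y j)))"
      for x y by (simp add: Tmat_conj_entry diag algebra_simps)
    have "Lop Q C $ i $ j = (\<Sum>x\<in>UNIV. \<Sum>y\<in>UNIV. q x y / N * (transpose (Tmat x y) ** C ** Tmat x y) $ i $ j)"
      by (simp add: Lop_def smat_def q_def N_def)
    also have "\<dots> = (1 / N) * ((\<Sum>x\<in>UNIV. \<Sum>y\<in>UNIV. q x y) * C $ i $ j
        + (\<Sum>x\<in>UNIV. \<Sum>y\<in>UNIV. q x y * (edge_diff x y i * C $ x $ j))
        + (\<Sum>x\<in>UNIV. \<Sum>y\<in>UNIV. q x y * (edge_diff x y j * C $ i $ x))
        + c * (\<Sum>x\<in>UNIV. \<Sum>y\<in>UNIV. q x y * (edge_diff x y i * edge_diff x y j)))"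
      unfolding averaged_entry
      by (simp only: sum.distrib sum_distrib_left[symmetric] sum_distrib_right[symmetric])
    also have "\<dots> = (1 / N) * (N * C $ i $ j + ((\<Sum>x\<in>UNIV. q i x * C $ x $ j) - C $ i $ j)
        + ((\<Sum>x\<in>UNIV. q j x * C $ i $ x) - C $ i $ j)
        + c * (2 * (if i = j then 1 else 0) - 2 * q i j))"
      by (simp only: total_weight average_edge_diff average_edge_diff_square N_def)
    also have "\<dots> = L0op Q C $ i $ j"
      using N0 by (simp add: L0op_entry[OF sym] trace_C q_def[symmetric] N_def[symmetric]
          field_simps power2_eq_square)
    finally show ?thesis .
  qed
  then show ?thesis by (simp add: vec_eq_iff)
qed

section \<open>The coefficients alpha\<close>

text \<open>alpha(n,.) is supported in {0..n}, so all series in the statement are finite sums.\<close>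

lemma alpha_vanishes: "n < s \<Longrightarrow> alpha Q n s = 0"
proof (induction n arbitrary: s)
  case 0
  then show ?case by simp
next
  case (Suc n)
  then have "s \<noteq> 0" "s \<noteq> 1" "n < s" "n < s - 1" by auto
  with Suc.IH show ?case by (simp add: Let_def)
qed

lemma alpha_series_finite:
  "n < K \<Longrightarrow> (\<Sum>s. alpha Q n s *\<^sub>R (M s :: 'a::real_normed_vector)) = (\<Sum>s<K. alpha Q n s *\<^sub>R M s)"
  by (rule suminf_finite) (auto simp: alpha_vanishes)

text \<open>The recursion for alpha in a uniform form: a damping term, a shifted term, and
  the trace contribution t entering at s = 0 and leaving at s = 1.\<close>

lemma alpha_Suc:
  fixes Q :: "real^'e^'e" and n :: nat
  defines "N \<equiv> real CARD('e)"
  defines "t \<equiv> 2 / N^2 * (1 + (\<Sum>s<Suc n. alpha Q n s * trace (mpow Q s)))"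
  shows "alpha Q (Suc n) s = (N - 2) / N * alpha Q n s
      + (if s = 0 then 0 else 2 / N * alpha Q n (s - 1))
      + (if s = 0 then t else 0) - (if s = 1 then t else 0)"
proof -
  define S where "S = (\<Sum>s. alpha Q n (Suc s) * trace (mpow Q (Suc s)))"
  have N0: "N \<noteq> 0" unfolding N_def by simp
  have "S = (\<Sum>s<n. alpha Q n (Suc s) * trace (mpow Q (Suc s)))"
    unfolding S_def by (rule suminf_finite) (auto simp: alpha_vanishes)
  also have "\<dots> = (\<Sum>s<Suc n. alpha Q n s * trace (mpow Q s)) - N * alpha Q n 0"
    unfolding sum.lessThan_Suc_shift by (simp add: trace_I N_def)
  finally have t: "t = 2 / N^2 * (1 + N * alpha Q n 0 + S)"
    unfolding t_def by simp
  have "alpha Q (Suc n) s = (if s = 0 then 2 / N^2 + alpha Q n 0 + 2 / N^2 * S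
      else if s = 1 then - 2 / N^2 + (N - 2) / N * alpha Q n 1 - 2 / N^2 * S
      else (N - 2) / N * alpha Q n s + 2 / N * alpha Q n (s - 1))"
    by (simp only: alpha.simps Let_def N_def S_def)
  then show ?thesis
    using N0 by (simp add: t field_simps power2_eq_square)
qed

lemma sum_delta_scaleR:
  "(k::nat) < K \<Longrightarrow> (\<Sum>s<K. (if s = k then t else 0) *\<^sub>R (M s :: 'a::real_vector)) = t *\<^sub>R M k"
proof -
  assume "k < K"
  have "(\<Sum>s<K. (if s = k then t else 0) *\<^sub>R M s) = (\<Sum>s<K. if s = k then t *\<^sub>R M k else 0)"
    by (rule sum.cong) auto
  with \<open>k < K\<close> show ?thesis by simp
qed

lemma coefficient_shift:
  fixes a b :: "nat \<Rightarrow> real" and M :: "nat \<Rightarrow> 'a::real_vector"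
  assumes K: "0 < K" and top: "a K = 0"
    and b: "\<And>s. b s = u * a s + (if s = 0 then 0 else v * a (s - 1))
                       + (if s = 0 then t else 0) - (if s = 1 then t else 0)"
  shows "(\<Sum>s<Suc K. b s *\<^sub>R M s)
    = u *\<^sub>R (\<Sum>s<K. a s *\<^sub>R M s) + v *\<^sub>R (\<Sum>s<K. a s *\<^sub>R M (Suc s)) + t *\<^sub>R M 0 - t *\<^sub>R M 1"
proof -
  have "(\<Sum>s<Suc K. b s *\<^sub>R M s) = (\<Sum>s<Suc K. (u * a s) *\<^sub>R M s)
      + (\<Sum>s<Suc K. (if s = 0 then 0 else v * a (s - 1)) *\<^sub>R M s)
      + (\<Sum>s<Suc K. (if s = 0 then t else 0) *\<^sub>R M s)
      - (\<Sum>s<Suc K. (if s = 1 then t else 0) *\<^sub>R M s)"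
    by (simp only: b scaleR_add_left scaleR_diff_left sum.distrib sum_subtractf)
  also have "(\<Sum>s<Suc K. (u * a s) *\<^sub>R M s) = u *\<^sub>R (\<Sum>s<K. a s *\<^sub>R M s)"
    by (simp add: top scaleR_sum_right)
  also have "(\<Sum>s<Suc K. (if s = 0 then 0 else v * a (s - 1)) *\<^sub>R M s)
      = v *\<^sub>R (\<Sum>s<K. a s *\<^sub>R M (Suc s))"
    unfolding sum.lessThan_Suc_shift by (simp add: scaleR_sum_right)
  also have "(\<Sum>s<Suc K. (if s = 0 then t else 0) *\<^sub>R M s) = t *\<^sub>R M 0"
    by (rule sum_delta_scaleR) simp
  also have "(\<Sum>s<Suc K. (if s = 1 then t else 0) *\<^sub>R M s) = t *\<^sub>R M 1"
    by (rule sum_delta_scaleR) (simp add: K)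
  finally show ?thesis .
qed

section \<open>The iterates of L0 and L on J\<close>

lemma L0op_formula:
  fixes Q :: "real^'e^'e"
  defines "N \<equiv> real CARD('e)"
  assumes "trace C = complex_of_real T"
  shows "L0op Q C = ((N - 2) / N) *\<^sub>R C + (1 / N) *\<^sub>R (C ** cmat Q + cmat Q ** C)
     - (2 / N^2 * T) *\<^sub>R cmat Q + (2 / N^2 * T) *\<^sub>R mat 1"
proof -
  have "(of_nat CARD('e) - 2) / of_nat CARD('e) = complex_of_real ((N - 2) / N)"
    and "1 / of_nat CARD('e) = complex_of_real (1 / N)"
    and "2 * trace C / (of_nat CARD('e))^2 = complex_of_real (2 / N^2 * T)"
    by (simp_all add: assms)
  then show ?thesis by (simp only: L0op_def Let_def smat_of_real)
qed

lemma trace_Jmat_plus_series: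
  fixes Q :: "real^'e^'e" and a :: "nat \<Rightarrow> real"
  shows "trace (Jmat + (\<Sum>s<K. a s *\<^sub>R mpow (cmat Q) s))
     = complex_of_real (1 + (\<Sum>s<K. a s * trace (mpow Q s)))"
  by (simp add: trace_add trace_Jmat trace_sum trace_scaleR mpow_cmat trace_cmat
      scaleR_conv_of_real[where 'a=complex])

lemma Jmat_plus_series_times:
  fixes Q :: "real^'e^'e" and a :: "nat \<Rightarrow> real" and K :: nat
  assumes st: "stochastic Q" and sym: "\<forall>x y. Q $ x $ y = Q $ y $ x"
  defines "C \<equiv> Jmat + (\<Sum>s<K. a s *\<^sub>R mpow (cmat Q) s)"
    and "R \<equiv> (\<Sum>s<K. a s *\<^sub>R mpow (cmat Q) (Suc s))"
  shows "C ** cmat Q = Jmat + R" and "cmat Q ** C = Jmat + R"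
proof -
  have power_shift: "mpow (cmat Q) s ** cmat Q = mpow (cmat Q) (Suc s)" for s
    by (simp add: mpow_commute)
  have "(\<Sum>s<K. a s *\<^sub>R mpow (cmat Q) s) ** cmat Q = R"
      "cmat Q ** (\<Sum>s<K. a s *\<^sub>R mpow (cmat Q) s) = R"
    by (simp_all only: R_def matrix_mul_sum_left[OF finite_lessThan]
        matrix_mul_sum_right[OF finite_lessThan] matrix_mul_scaleR_left matrix_mul_scaleR_right
        power_shift mpow.simps)
  then show "C ** cmat Q = Jmat + R" and "cmat Q ** C = Jmat + R"
    by (simp_all add: C_def Jmat_absorbs[OF st sym] matrix_add_rdistrib matrix_add_ldistrib)
qed

lemma L0op_step:
  fixes Q :: "real^'e^'e"
  assumes st: "stochastic Q" and sym: "\<forall>x y. Q $ x $ y = Q $ y $ x"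
  shows "L0op Q (Jmat + (\<Sum>s<Suc n. alpha Q n s *\<^sub>R mpow (cmat Q) s))
    = Jmat + (\<Sum>s<Suc (Suc n). alpha Q (Suc n) s *\<^sub>R mpow (cmat Q) s)"
proof -
  define N where "N = real CARD('e)"
  define a where "a = alpha Q n"
  define M where "M = mpow (cmat Q)"
  define P where "P = (\<Sum>s<Suc n. a s *\<^sub>R M s)"
  define R where "R = (\<Sum>s<Suc n. a s *\<^sub>R M (Suc s))"
  define T where "T = 1 + (\<Sum>s<Suc n. a s * trace (mpow Q s))"
  define t where "t = 2 / N^2 * T"
  have N0: "N \<noteq> 0" unfolding N_def by simp
  have trace_JP: "trace (Jmat + P) = complex_of_real T"
    unfolding P_def M_def T_def by (rule trace_Jmat_plus_series)
  have products: "(Jmat + P) ** cmat Q = Jmat + R" "cmat Q ** (Jmat + P) = Jmat + R"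
    unfolding P_def R_def M_def by (rule Jmat_plus_series_times[OF st sym])+
  have double: "(1 / N) *\<^sub>R (X + X) = (2 / N) *\<^sub>R X" for X :: "complex^'e^'e"
    by (simp add: scaleR_2[symmetric] del: scaleR_2)
  have "L0op Q (Jmat + P)
      = ((N - 2) / N) *\<^sub>R (Jmat + P) + (2 / N) *\<^sub>R (Jmat + R) - t *\<^sub>R M 1 + t *\<^sub>R M 0"
    unfolding L0op_formula[OF trace_JP, of Q, folded N_def] products double
    by (simp add: M_def t_def)
  also have "\<dots> = (((N - 2) / N + 2 / N) *\<^sub>R Jmat)
      + (((N - 2) / N) *\<^sub>R P + (2 / N) *\<^sub>R R + t *\<^sub>R M 0 - t *\<^sub>R M 1)"
    by (simp add: scaleR_add_right scaleR_add_left algebra_simps)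
  also have "(N - 2) / N + 2 / N = 1"
    using N0 by (simp add: field_simps)
  also have "((N - 2) / N) *\<^sub>R P + (2 / N) *\<^sub>R R + t *\<^sub>R M 0 - t *\<^sub>R M 1
      = (\<Sum>s<Suc (Suc n). alpha Q (Suc n) s *\<^sub>R M s)"
  proof -
    have "alpha Q (Suc n) s = (N - 2) / N * a s + (if s = 0 then 0 else 2 / N * a (s - 1))
        + (if s = 0 then t else 0) - (if s = 1 then t else 0)" for s
      by (simp only: alpha_Suc t_def T_def a_def N_def)
    moreover have "a (Suc n) = 0" by (simp add: a_def alpha_vanishes)
    ultimately show ?thesis
      unfolding P_def R_def by (intro coefficient_shift[symmetric]) simp_all
  qed
  finally have "L0op Q (Jmat + P) = Jmat + (\<Sum>s<Suc (Suc n). alpha Q (Suc n) s *\<^sub>R M s)"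
    by (simp only: scaleR_one)
  then show ?thesis by (simp only: P_def a_def M_def)
qed

lemma L0op_iterate:
  fixes Q :: "real^'e^'e"
  assumes st: "stochastic Q" and sym: "\<forall>x y. Q $ x $ y = Q $ y $ x"
  shows "(L0op Q ^^ n) Jmat = Jmat + (\<Sum>s. alpha Q n s *\<^sub>R mpow (cmat Q) s)"
proof (induction n)
  case 0
  show ?case by simp
next
  case (Suc n)
  have "(L0op Q ^^ Suc n) Jmat = L0op Q (Jmat + (\<Sum>s<Suc n. alpha Q n s *\<^sub>R mpow (cmat Q) s))"
    using Suc.IH by (simp add: alpha_series_finite[of n "Suc n"])
  also have "\<dots> = Jmat + (\<Sum>s<Suc (Suc n). alpha Q (Suc n) s *\<^sub>R mpow (cmat Q) s)"
    by (rule L0op_step[OF st sym])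
  finally show ?case by (simp only: alpha_series_finite[OF lessI])
qed

lemma walk_regular_constant_diagonal:
  fixes Q :: "real^'e^'e" and a :: "nat \<Rightarrow> real"
  assumes "walk_regular Q"
  shows "(Jmat + (\<Sum>s<K. a s *\<^sub>R mpow (cmat Q) s)) $ x $ x
       = (Jmat + (\<Sum>s<K. a s *\<^sub>R mpow (cmat Q) s)) $ y $ y"
proof -
  have "mpow Q s $ x $ x = mpow Q s $ y $ y" for s
    using assms unfolding walk_regular_def by blast
  then show ?thesis by (simp add: Jmat_def mpow_cmat)
qed

text \<open>The second claim: for walk-regular Q each iterate of L0 on J has constant diagonal,
  so L acts on it as L0 does.\<close>

lemma Lop_iterate:
  fixes Q :: "real^'e^'e"
  assumes st: "stochastic Q" and sym: "\<forall>x y. Q $ x $ y = Q $ y $ x" and wr: "walk_regular Q"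
  shows "(Lop Q ^^ n) Jmat = (L0op Q ^^ n) Jmat"
proof (induction n)
  case 0
  show ?case by simp
next
  case (Suc n)
  define C where "C = (L0op Q ^^ n) Jmat"
  have C: "C = Jmat + (\<Sum>s<Suc n. alpha Q n s *\<^sub>R mpow (cmat Q) s)"
    unfolding C_def L0op_iterate[OF st sym] by (simp only: alpha_series_finite[OF lessI])
  have "C $ x $ x = C $ undefined $ undefined" for x
    unfolding C by (rule walk_regular_constant_diagonal[OF wr])
  then have "Lop Q C = L0op Q C"
    by (rule Lop_eq_L0op[OF st sym])
  with Suc.IH show ?case by (simp add: C_def)
qed

theorem lemma3p1:
  fixes Q :: "real^'e^'e"
  assumes "CARD('e) > 8"
    and "stochastic Q"
    and "irreducible_mat Q"
    and "\<forall>x y. Q $ x $ y = Q $ y $ x"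
    and "trace Q = 0"
  shows "(\<forall>n. (L0op Q ^^ n) Jmat = Jmat + (\<Sum>s. alpha Q n s *\<^sub>R mpow (cmat Q) s))
    \<and> (walk_regular Q \<longrightarrow>
        (\<forall>n. (Lop Q ^^ n) Jmat = (L0op Q ^^ n) Jmat
           \<and> (Lop Q ^^ n) Jmat = Jmat + (\<Sum>s. alpha Q n s *\<^sub>R mpow (cmat Q) s)))"
  using L0op_iterate[OF assms(2,4)] Lop_iterate[OF assms(2,4)] by simp

end
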